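(* Consider a time-invariant UMCO channel on finite alphabets and suppose that for every time-invariant channel input distribution $\pi^\infty$ the output transition matrix $\mathbf P(\pi^\infty)=\{\mathbf P^{\pi^\infty}(b_0|b_{-1})\}_{b_0,b_{-1}\in\mathbb B}$ is irreducible. Then for every $\pi^\infty$ and every initial distribution $\mu$, $$J(\pi^\infty,\mu)=\nu(\pi^\infty)^T\ell(\pi^\infty)=:J(\pi^\infty),$$ which is independent of $\mu$, where $\nu(\pi^\infty)$ is the unique invariant distribution, $\mathbf P(\pi^\infty)\nu(\pi^\infty)=\nu(\pi^\infty)$. If moreover there is a time-invariant $\pi^{\infty,*}$ with $J(\pi^{\infty,*})=\max_{\pi^\infty}J(\pi^\infty)$, then there exist $V:\mathbb B\to\mathbb R$ such that $$J(\pi^{\infty,*})+V(b_{-1})=\sup_{\pi^\infty(\cdot|b_{-1})}\Big\{\ell(b_{-1},\pi^\infty(b_{-1}))+\sum_{z\in\mathbb B}V(z)\mathbf P^{\pi^\infty}(z|b_{-1})\Big\}\quad\forall b_{-1}\in\mathbb B,$$ and $J(\pi^{\infty,*})=C^{FB,UMCO}_{A^\infty\to B^\infty}=\liminf_{n\to\infty}\frac1n\sup_{\pi^\infty}\mathbf E^{\pi^\infty}_\mu[\sum_{i=0}^{n-1}\log\frac{\mathbf P(B_i|B_{i-1},A_i)}{\mathbf P^{\pi^\infty}(B_i|B_{i-1})}]$ for every $\mu$.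
   Context: Time-invariant UMCO channel $\mathbf P(b_i|b_{i-1},a_i)$ on finite alphabets $\mathbb A,\mathbb B$; time-invariant input $\pi^\infty(a_i|b_{i-1})$; $\mathbf P^{\pi^\infty}(b_i|b_{i-1})=\sum_a\mathbf P(b_i|b_{i-1},a)\pi^\infty(a|b_{i-1})$. $\ell(b,\pi^\infty(b))=\sum_{a}\sum_{b'}\log\frac{\mathbf P(b'|b,a)}{\mathbf P^{\pi^\infty}(b'|b)}\mathbf P(b'|b,a)\pi^\infty(a|b)$, and $\ell(\pi^\infty)\in\mathbb R^{|\mathbb B|}$ is the vector of these values. $J(\pi^\infty,\mu)=\liminf_{n\to\infty}\frac1n\mathbf E^{\pi^\infty}_\mu[\sum_{i=0}^{n-1}\log\frac{\mathbf P(B_i|B_{i-1},A_i)}{\mathbf P^{\pi^\infty}(B_i|B_{i-1})}]$, with $B_{-1}\sim\mu$. *)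

theory Defs
  imports "HOL-Analysis.Analysis"
begin

text \<open>Conventions. Channel: P b a b' = P(b'|b,a) (b = b_{i-1}, a = a_i, b' = b_i).
  Time-invariant input: p b a = p(a|b). Logarithms are natural logarithms.\<close>

definition is_dist :: "('x::finite \<Rightarrow> real) \<Rightarrow> bool" where
  "is_dist q \<longleftrightarrow> (\<forall>x. 0 \<le> q x) \<and> sum q UNIV = 1"

definition umco_channel :: "('b::finite \<Rightarrow> 'a::finite \<Rightarrow> 'b \<Rightarrow> real) \<Rightarrow> bool" where
  "umco_channel P \<longleftrightarrow> (\<forall>b a. is_dist (P b a))"

definition ti_policy :: "('b::finite \<Rightarrow> 'a::finite \<Rightarrow> real) \<Rightarrow> bool" where
  "ti_policy p \<longleftrightarrow> (\<forall>b. is_dist (p b))"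

definition outK :: "('b::finite \<Rightarrow> 'a::finite \<Rightarrow> 'b \<Rightarrow> real) \<Rightarrow> ('b \<Rightarrow> 'a \<Rightarrow> real) \<Rightarrow> 'b \<Rightarrow> 'b \<Rightarrow> real" where
  "outK P p b b' = (\<Sum>a\<in>UNIV. P b a b' * p b a)"

definition ell1 :: "('b::finite \<Rightarrow> 'a::finite \<Rightarrow> 'b \<Rightarrow> real) \<Rightarrow> 'b \<Rightarrow> ('a \<Rightarrow> real) \<Rightarrow> real" where
  "ell1 P b q = (\<Sum>a\<in>UNIV. \<Sum>b'\<in>UNIV.
      ln (P b a b' / (\<Sum>a'\<in>UNIV. P b a' b' * q a')) * P b a b' * q a)"

definition ell :: "('b::finite \<Rightarrow> 'a::finite \<Rightarrow> 'b \<Rightarrow> real) \<Rightarrow> ('b \<Rightarrow> 'a \<Rightarrow> real) \<Rightarrow> 'b \<Rightarrow> real" where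
  "ell P p b = ell1 P b (p b)"

text \<open>marg P p mu i = distribution of B_{i-1} when B_{-1} ~ mu,
  A_i ~ p(.|B_{i-1}), B_i ~ P(.|B_{i-1},A_i).\<close>
fun marg :: "('b::finite \<Rightarrow> 'a::finite \<Rightarrow> 'b \<Rightarrow> real) \<Rightarrow> ('b \<Rightarrow> 'a \<Rightarrow> real) \<Rightarrow> ('b \<Rightarrow> real) \<Rightarrow> nat \<Rightarrow> 'b \<Rightarrow> real" where
  "marg P p mu 0 = mu"
| "marg P p mu (Suc i) = (\<lambda>b'. \<Sum>b\<in>UNIV. \<Sum>a\<in>UNIV. marg P p mu i b * p b a * P b a b')"

text \<open>E^pi_mu [ sum_{i=0}^{n-1} log (P(B_i|B_{i-1},A_i) / P^p(B_i|B_{i-1})) ], computed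
  from the joint law of (B_{i-1}, A_i, B_i).\<close>
definition expsum :: "('b::finite \<Rightarrow> 'a::finite \<Rightarrow> 'b \<Rightarrow> real) \<Rightarrow> ('b \<Rightarrow> 'a \<Rightarrow> real) \<Rightarrow> ('b \<Rightarrow> real) \<Rightarrow> nat \<Rightarrow> real" where
  "expsum P p mu n = (\<Sum>i<n. \<Sum>b\<in>UNIV. \<Sum>a\<in>UNIV. \<Sum>b'\<in>UNIV.
      marg P p mu i b * p b a * P b a b' * ln (P b a b' / outK P p b b'))"

definition Jmu :: "('b::finite \<Rightarrow> 'a::finite \<Rightarrow> 'b \<Rightarrow> real) \<Rightarrow> ('b \<Rightarrow> 'a \<Rightarrow> real) \<Rightarrow> ('b \<Rightarrow> real) \<Rightarrow> ereal" where
  "Jmu P p mu = liminf (\<lambda>n. ereal (expsum P p mu n / real n))"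

fun kpow :: "('b::finite \<Rightarrow> 'b \<Rightarrow> real) \<Rightarrow> nat \<Rightarrow> 'b \<Rightarrow> 'b \<Rightarrow> real" where
  "kpow K 0 = (\<lambda>x y. if x = y then 1 else 0)"
| "kpow K (Suc n) = (\<lambda>x z. \<Sum>y\<in>UNIV. kpow K n x y * K y z)"

definition irreducible_kernel :: "('b::finite \<Rightarrow> 'b \<Rightarrow> real) \<Rightarrow> bool" where
  "irreducible_kernel K \<longleftrightarrow> (\<forall>x y. \<exists>n. kpow K n x y > 0)"

definition invariant_dist :: "('b::finite \<Rightarrow> 'a::finite \<Rightarrow> 'b \<Rightarrow> real) \<Rightarrow> ('b \<Rightarrow> 'a \<Rightarrow> real) \<Rightarrow> ('b \<Rightarrow> real) \<Rightarrow> bool" where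
  "invariant_dist P p nu \<longleftrightarrow> is_dist nu \<and> (\<forall>b'. (\<Sum>b\<in>UNIV. outK P p b b' * nu b) = nu b')"

definition Jinf :: "('b::finite \<Rightarrow> 'a::finite \<Rightarrow> 'b \<Rightarrow> real) \<Rightarrow> ('b \<Rightarrow> 'a \<Rightarrow> real) \<Rightarrow> real" where
  "Jinf P p = (\<Sum>b\<in>UNIV. (THE nu. invariant_dist P p nu) b * ell P p b)"

definition capacity_FB :: "('b::finite \<Rightarrow> 'a::finite \<Rightarrow> 'b \<Rightarrow> real) \<Rightarrow> ('b \<Rightarrow> real) \<Rightarrow> ereal" where
  "capacity_FB P mu = liminf (\<lambda>n. ereal (1 / real n) *
      (SUP p\<in>{p. ti_policy p}. ereal (expsum P p mu n)))"

end

theory Submission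
  imports Defs
begin

text \<open>
  For a finite irreducible stochastic kernel K the operator h \<mapsto> h - K h has a one-dimensional
  kernel (the constants, by the maximum principle), hence its range is the hyperplane orthogonal to
  any stationary distribution. This gives existence and uniqueness of the stationary distribution
  and solvability of the Poisson equation f - J = V - K V whenever J is the stationary mean of f.
  Along the chain of output marginals the sum of f then telescopes to n J plus a bounded term,
  which yields the average reward. For an optimal policy the same relative value V satisfies the
  Bellman inequality at every state and every input distribution: otherwise changing the policy at
  that single state would raise the average reward by a positive multiple of the stationary mass
  of the state. The telescoping bound then caps the reward of every policy by n J plus a
  constant, so the normalized supremum also converges to J.
\<close>

definition stochastic_kernel :: "('b::finite \<Rightarrow> 'b \<Rightarrow> real) \<Rightarrow> bool" where
  "stochastic_kernel K \<longleftrightarrow> (\<forall>x. is_dist (K x))"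

definition stationary_dist :: "('b::finite \<Rightarrow> 'b \<Rightarrow> real) \<Rightarrow> ('b \<Rightarrow> real) \<Rightarrow> bool" where
  "stationary_dist K nu \<longleftrightarrow> is_dist nu \<and> (\<forall>y. (\<Sum>x\<in>UNIV. nu x * K x y) = nu y)"

lemma is_dist_nonneg: "is_dist q \<Longrightarrow> 0 \<le> q x"
  by (simp add: is_dist_def)

lemma is_dist_sum: "is_dist q \<Longrightarrow> sum q UNIV = 1"
  by (simp add: is_dist_def)

lemma is_dist_le_one:
  assumes "is_dist q"
  shows "q x \<le> 1"
proof -
  have "q x \<le> sum q UNIV"
    using assms by (intro member_le_sum) (auto simp: is_dist_def)
  then show ?thesis
    using assms by (simp add: is_dist_def)
qed

lemma is_dist_ex_pos:
  assumes "is_dist q"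
  obtains x where "0 < q x"
proof -
  obtain x where "q x \<noteq> 0"
    using is_dist_sum[OF assms] by (metis sum.neutral zero_neq_one)
  then show ?thesis
    using that[of x] is_dist_nonneg[OF assms, of x] by linarith
qed

lemma abs_dist_sum_le:
  assumes "is_dist q"
  shows "\<bar>\<Sum>x\<in>UNIV. q x * f x\<bar> \<le> (\<Sum>x\<in>UNIV. \<bar>f x\<bar>)"
proof -
  have "\<bar>\<Sum>x\<in>UNIV. q x * f x\<bar> \<le> (\<Sum>x\<in>UNIV. q x * \<bar>f x\<bar>)"
    using sum_abs[of "\<lambda>x. q x * f x" UNIV] assms by (simp add: abs_mult is_dist_nonneg)
  also have "\<dots> \<le> (\<Sum>x\<in>UNIV. \<bar>f x\<bar>)"
    using assms by (intro sum_mono mult_left_le_one_le) (auto simp: is_dist_nonneg is_dist_le_one)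
  finally show ?thesis .
qed

lemma sum_indicator_mult [simp]:
  "(\<Sum>y\<in>UNIV. (if x = y then 1 else 0) * f y) = (f x :: real)"
  for x :: "'b::finite"
  by (simp add: if_distrib[of "\<lambda>c. c * _"] cong: if_cong)

lemma sum_mult_indicator [simp]:
  "(\<Sum>y\<in>UNIV. f y * (if y = x then 1 else 0)) = (f x :: real)"
  for x :: "'b::finite"
  by (simp add: if_distrib[of "(*) _"] cong: if_cong)

lemma stochastic_kernel_nonneg: "stochastic_kernel K \<Longrightarrow> 0 \<le> K x y"
  by (simp add: stochastic_kernel_def is_dist_def)

lemma stochastic_kernel_row_sum: "stochastic_kernel K \<Longrightarrow> sum (K x) UNIV = 1"
  by (simp add: stochastic_kernel_def is_dist_def)

lemma sum_kernel_swap: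
  fixes K :: "'b::finite \<Rightarrow> 'b \<Rightarrow> real"
  shows "(\<Sum>x\<in>UNIV. m x * (\<Sum>y\<in>UNIV. K x y * h y)) = (\<Sum>y\<in>UNIV. (\<Sum>x\<in>UNIV. m x * K x y) * h y)"
  unfolding sum_distrib_left sum_distrib_right mult.assoc by (rule sum.swap)

lemma stationary_dist_sum_kernel:
  assumes "stationary_dist K nu"
  shows "(\<Sum>x\<in>UNIV. nu x * (\<Sum>y\<in>UNIV. K x y * h y)) = (\<Sum>y\<in>UNIV. nu y * h y)"
  using assms by (simp add: sum_kernel_swap stationary_dist_def)

lemma is_dist_kernel_step:
  assumes "stochastic_kernel K" and "is_dist m"
  shows "is_dist (\<lambda>y. \<Sum>x\<in>UNIV. m x * K x y)"
proof -
  have "(\<Sum>y\<in>UNIV. \<Sum>x\<in>UNIV. m x * K x y) = (\<Sum>x\<in>UNIV. m x * sum (K x) UNIV)"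
    by (simp add: sum_distrib_left) (rule sum.swap)
  then show ?thesis
    using assms by (auto simp: is_dist_def stochastic_kernel_row_sum stochastic_kernel_nonneg
        intro!: sum_nonneg)
qed

subsection \<open>Irreducible kernels\<close>

lemma kpow_nonneg: "stochastic_kernel K \<Longrightarrow> 0 \<le> kpow K n x y"
  by (induction n arbitrary: y) (auto intro!: sum_nonneg simp: stochastic_kernel_nonneg)

lemma kpow_harmonic:
  assumes "\<And>x. h x = (\<Sum>y\<in>UNIV. K x y * h y)"
  shows "h x = (\<Sum>y\<in>UNIV. kpow K n x y * h y)"
proof (induction n)
  case 0
  then show ?case by simp
next
  case (Suc n)
  have "(\<Sum>z\<in>UNIV. kpow K (Suc n) x z * h z) = (\<Sum>y\<in>UNIV. kpow K n x y * (\<Sum>z\<in>UNIV. K y z * h z))"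
    by (simp add: sum_kernel_swap)
  then show ?case
    using Suc by (simp flip: assms)
qed

lemma kpow_stationary:
  assumes "\<And>y. (\<Sum>x\<in>UNIV. w x * K x y) = w y"
  shows "(\<Sum>x\<in>UNIV. w x * kpow K n x y) = w y"
proof (induction n arbitrary: y)
  case 0
  then show ?case by simp
next
  case (Suc n)
  have "(\<Sum>x\<in>UNIV. w x * kpow K (Suc n) x y) = (\<Sum>z\<in>UNIV. (\<Sum>x\<in>UNIV. w x * kpow K n x z) * K z y)"
    by (simp add: sum_distrib_left sum_distrib_right mult.assoc) (rule sum.swap)
  then show ?case
    using Suc assms by simp
qed

text \<open>Maximum principle: at a maximum of h every state reachable from it carries the same value.\<close>

lemma harmonic_function_const:
  fixes K :: "'b::finite \<Rightarrow> 'b \<Rightarrow> real"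
  assumes K: "stochastic_kernel K" and irr: "irreducible_kernel K"
    and h: "\<And>x. h x = (\<Sum>y\<in>UNIV. K x y * h y)"
  shows "h x = h y"
proof -
  obtain x0 where x0: "\<And>z. h z \<le> h x0"
    using Max_in[of "range h"] Max_ge[of "range h"] by fastforce
  have "h z = h x0" for z
  proof -
    obtain n where n: "0 < kpow K n x0 z"
      using irr by (auto simp: irreducible_kernel_def)
    have one: "(\<Sum>y\<in>UNIV. kpow K n x0 y) = 1"
      using kpow_harmonic[of "\<lambda>_. 1" K x0 n] by (simp add: stochastic_kernel_row_sum[OF K])
    have "(\<Sum>y\<in>UNIV. kpow K n x0 y * (h x0 - h y)) = 0"
      using one kpow_harmonic[OF h, of x0 n]
      by (simp add: right_diff_distrib sum_subtractf flip: sum_distrib_right)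
    then have "\<forall>y. kpow K n x0 y * (h x0 - h y) = 0"
      by (subst (asm) sum_nonneg_eq_0_iff) (auto simp: x0 kpow_nonneg[OF K])
    then show ?thesis
      using n by (metis less_irrefl mult_eq_0_iff right_minus_eq)
  qed
  then show ?thesis
    by metis
qed

lemma stationary_dist_pos:
  fixes K :: "'b::finite \<Rightarrow> 'b \<Rightarrow> real"
  assumes K: "stochastic_kernel K" and irr: "irreducible_kernel K" and nu: "stationary_dist K nu"
  shows "0 < nu y"
proof -
  have d: "is_dist nu"
    using nu by (simp add: stationary_dist_def)
  obtain x where x: "0 < nu x"
    using is_dist_ex_pos[OF d] .
  obtain n where n: "0 < kpow K n x y"
    using irr by (auto simp: irreducible_kernel_def)
  have "nu x * kpow K n x y \<le> (\<Sum>x'\<in>UNIV. nu x' * kpow K n x' y)"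
    using d by (intro member_le_sum) (auto simp: is_dist_nonneg kpow_nonneg[OF K])
  also have "\<dots> = nu y"
    using nu by (intro kpow_stationary) (simp add: stationary_dist_def)
  finally show ?thesis
    using x n by (meson mult_pos_pos order_less_le_trans)
qed

subsection \<open>The operator I - K\<close>

definition kernel_laplacian :: "('b::finite \<Rightarrow> 'b \<Rightarrow> real) \<Rightarrow> real^'b \<Rightarrow> real^'b" where
  "kernel_laplacian K h = (\<chi> x. h$x - (\<Sum>y\<in>UNIV. K x y * h$y))"

lemma kernel_laplacian_nth [simp]:
  "kernel_laplacian K h $ x = h$x - (\<Sum>y\<in>UNIV. K x y * h$y)"
  by (simp add: kernel_laplacian_def)

lemma linear_kernel_laplacian: "linear (kernel_laplacian K)"
proof -
  have "kernel_laplacian K = (\<lambda>h. h - (\<chi> i j. K i j) *v h)"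
    by (auto simp: vec_eq_iff matrix_vector_mult_def)
  then show ?thesis
    by (simp add: linear_compose_sub matrix_vector_mul_linear linear_id[unfolded id_def])
qed

lemma subspace_range_kernel_laplacian: "subspace (range (kernel_laplacian K))"
  by (rule linear_subspace_image[OF linear_kernel_laplacian subspace_UNIV])

lemma kernel_laplacian_eq_0_const:
  assumes "stochastic_kernel K" and "irreducible_kernel K" and "kernel_laplacian K h = 0"
  shows "h$x = h$y"
proof -
  have "h$x = (\<Sum>y\<in>UNIV. K x y * h$y)" for x
    using arg_cong[OF assms(3), of "\<lambda>v. v$x"] by simp
  then show ?thesis
    by (rule harmonic_function_const[OF assms(1,2), of "\<lambda>z. h$z"])
qed

text \<open>At a minimum of h the value of h - K h is nonpositive.\<close>

lemma kernel_laplacian_ne_one: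
  assumes K: "stochastic_kernel K"
  shows "kernel_laplacian K h \<noteq> (\<chi> i. 1)"
proof
  assume eq: "kernel_laplacian K h = (\<chi> i. 1)"
  obtain x1 where x1: "\<And>z. h$x1 \<le> h$z"
    using Min_in[of "range (\<lambda>x. h$x)"] Min_le[of "range (\<lambda>x. h$x)"] by fastforce
  have "h$x1 = (\<Sum>y\<in>UNIV. K x1 y * h$x1)"
    by (simp add: stochastic_kernel_row_sum[OF K] flip: sum_distrib_right)
  also have "\<dots> \<le> (\<Sum>y\<in>UNIV. K x1 y * h$y)"
    by (intro sum_mono mult_left_mono x1 stochastic_kernel_nonneg[OF K])
  finally have "kernel_laplacian K h $ x1 \<le> 0"
    by simp
  with eq show False
    by simp
qed

lemma dim_range_kernel_laplacian:
  fixes K :: "'b::finite \<Rightarrow> 'b \<Rightarrow> real"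
  assumes K: "stochastic_kernel K" and irr: "irreducible_kernel K"
  shows "dim (range (kernel_laplacian K)) = DIM(real^'b) - 1"
proof -
  define one :: "real^'b" where "one = (\<chi> i. 1)"
  define H where "H = {h. one \<bullet> h = 0}"
  have span_H: "span H = H"
    unfolding H_def by (simp add: span_eq_iff subspace_hyperplane)
  have "inj_on (kernel_laplacian K) (span H)"
    unfolding span_H
  proof (rule inj_onI)
    fix a b assume "a \<in> H" "b \<in> H" and e: "kernel_laplacian K a = kernel_laplacian K b"
    then have sum0: "(\<Sum>x\<in>UNIV. (a - b)$x) = 0"
      by (simp add: H_def one_def inner_vec_def sum_subtractf)
    have "kernel_laplacian K (a - b) = 0"
      by (simp add: linear_diff[OF linear_kernel_laplacian] e)
    then have c: "\<And>x y. (a - b)$x = (a - b)$y"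
      using kernel_laplacian_eq_0_const[OF K irr] by blast
    have "(\<Sum>y\<in>UNIV. (a - b)$y) = real CARD('b) * (a - b)$x" for x
      by (subst c[of _ x]) simp
    then have "(a - b)$x = 0" for x
      using sum0 by simp
    then show "a = b"
      by (simp add: vec_eq_iff)
  qed
  then have "dim (kernel_laplacian K ` H) = dim H"
    by (rule dim_image_eq[OF linear_kernel_laplacian])
  also have "\<dots> = DIM(real^'b) - 1"
    unfolding H_def by (rule dim_hyperplane) (simp add: one_def vec_eq_iff)
  finally
  have ge: "DIM(real^'b) - 1 \<le> dim (range (kernel_laplacian K))"
    using dim_subset[of "kernel_laplacian K ` H" "range (kernel_laplacian K)"] by auto
  have "range (kernel_laplacian K) \<noteq> UNIV"
    using kernel_laplacian_ne_one[OF K] by (metis UNIV_I image_iff)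
  then have "dim (range (kernel_laplacian K)) \<noteq> DIM(real^'b)"
    using dim_eq_full span_eq_iff subspace_range_kernel_laplacian by metis
  then show ?thesis
    using ge dim_subset_UNIV[of "range (kernel_laplacian K)"] by linarith
qed

subsection \<open>Stationary distributions and the Poisson equation\<close>

text \<open>A nonzero vector orthogonal to the range of I - K is a signed stationary measure; its
  absolute value is superstationary with the same total mass, hence stationary.\<close>

lemma stationary_dist_exists:
  fixes K :: "'b::finite \<Rightarrow> 'b \<Rightarrow> real"
  assumes K: "stochastic_kernel K" and irr: "irreducible_kernel K"
  obtains nu where "stationary_dist K nu"
proof -
  have "dim (range (kernel_laplacian K)) < DIM(real^'b)"
    using dim_range_kernel_laplacian[OF K irr] DIM_positive[where 'a="real^'b"] by linarith
  then obtain u :: "real^'b" where u0: "u \<noteq> 0"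
    and ort: "\<And>v. v \<in> span (range (kernel_laplacian K)) \<Longrightarrow> orthogonal u v"
    using orthogonal_to_subspace_exists by blast
  have u_stat: "(\<Sum>x\<in>UNIV. u$x * K x j) = u$j" for j
  proof -
    have "orthogonal u (kernel_laplacian K (axis j 1))"
      by (intro ort span_base) auto
    then show ?thesis
      by (simp add: orthogonal_def inner_vec_def axis_def right_diff_distrib sum_subtractf)
  qed
  define w where "w x = \<bar>u$x\<bar>" for x
  have w_le: "w y \<le> (\<Sum>x\<in>UNIV. w x * K x y)" for y
    using sum_abs[of "\<lambda>x. u$x * K x y" UNIV] u_stat[of y]
    by (simp add: w_def abs_mult stochastic_kernel_nonneg[OF K])
  have "(\<Sum>y\<in>UNIV. \<Sum>x\<in>UNIV. w x * K x y) = (\<Sum>x\<in>UNIV. w x * sum (K x) UNIV)"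
    by (simp add: sum_distrib_left) (rule sum.swap)
  then have "(\<Sum>y\<in>UNIV. (\<Sum>x\<in>UNIV. w x * K x y) - w y) = 0"
    by (simp add: sum_subtractf stochastic_kernel_row_sum[OF K])
  then have w_stat: "(\<Sum>x\<in>UNIV. w x * K x y) = w y" for y
    using w_le by (subst (asm) sum_nonneg_eq_0_iff) auto
  obtain x0 where "u$x0 \<noteq> 0"
    using u0 by (auto simp: vec_eq_iff)
  then have "0 < sum w UNIV"
    by (intro sum_pos2[of UNIV x0]) (auto simp: w_def)
  then have "stationary_dist K (\<lambda>x. w x / sum w UNIV)"
    using w_stat by (auto simp: stationary_dist_def is_dist_def w_def
        simp flip: sum_divide_distrib)
  then show ?thesis
    using that by blast
qed

lemma range_kernel_laplacian:
  fixes K :: "'b::finite \<Rightarrow> 'b \<Rightarrow> real"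
  assumes K: "stochastic_kernel K" and irr: "irreducible_kernel K" and nu: "stationary_dist K nu"
  shows "range (kernel_laplacian K) = {v. (\<chi> x. nu x) \<bullet> v = 0}"
proof (rule subspace_dim_equal)
  obtain x where "0 < nu x"
    using is_dist_ex_pos nu by (auto simp: stationary_dist_def)
  then have "(\<chi> x. nu x) \<noteq> 0"
    by (metis less_irrefl vec_lambda_beta zero_index)
  then show "dim {v. (\<chi> x. nu x) \<bullet> v = 0} \<le> dim (range (kernel_laplacian K))"
    by (simp add: dim_hyperplane dim_range_kernel_laplacian[OF K irr])
  show "range (kernel_laplacian K) \<subseteq> {v. (\<chi> x. nu x) \<bullet> v = 0}"
    using stationary_dist_sum_kernel[OF nu]
    by (auto simp: inner_vec_def right_diff_distrib sum_subtractf)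
qed (auto simp: subspace_range_kernel_laplacian subspace_hyperplane)

lemma poisson_equation_solvable:
  fixes K :: "'b::finite \<Rightarrow> 'b \<Rightarrow> real"
  assumes K: "stochastic_kernel K" and irr: "irreducible_kernel K" and nu: "stationary_dist K nu"
    and g: "(\<Sum>x\<in>UNIV. nu x * g x) = 0"
  obtains h where "\<And>x. g x = h x - (\<Sum>y\<in>UNIV. K x y * h y)"
proof -
  have "(\<chi> x. g x) \<in> range (kernel_laplacian K)"
    using g by (simp add: range_kernel_laplacian[OF assms(1-3)] inner_vec_def)
  then obtain h where "(\<chi> x. g x) = kernel_laplacian K h"
    by blast
  then have "g x = h$x - (\<Sum>y\<in>UNIV. K x y * h$y)" for x
    by (metis kernel_laplacian_nth vec_lambda_beta)
  then show ?thesis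
    using that by blast
qed

lemma stationary_dist_unique:
  fixes K :: "'b::finite \<Rightarrow> 'b \<Rightarrow> real"
  assumes K: "stochastic_kernel K" and irr: "irreducible_kernel K"
    and nu1: "stationary_dist K nu1" and nu2: "stationary_dist K nu2"
  shows "nu1 = nu2"
proof
  fix z
  define g where "g x = (if x = z then 1 else 0) - nu1 z" for x
  have g_mean: "(\<Sum>x\<in>UNIV. nu x * g x) = nu z - nu1 z" if "is_dist nu" for nu
    using is_dist_sum[OF that]
    by (simp add: g_def right_diff_distrib sum_subtractf flip: sum_distrib_right)
  obtain h where h: "\<And>x. g x = h x - (\<Sum>y\<in>UNIV. K x y * h y)"
    using poisson_equation_solvable[OF K irr nu1, of g] g_mean nu1
    by (auto simp: stationary_dist_def)
  have "(\<Sum>x\<in>UNIV. nu2 x * g x) = 0"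
    using stationary_dist_sum_kernel[OF nu2, of h]
    by (simp add: h right_diff_distrib sum_subtractf)
  then show "nu1 z = nu2 z"
    using g_mean nu2 by (simp add: stationary_dist_def)
qed

lemma stationary_dist_ex1:
  assumes "stochastic_kernel K" and "irreducible_kernel K"
  shows "\<exists>!nu. stationary_dist K nu"
proof -
  obtain nu where "stationary_dist K nu"
    using stationary_dist_exists[OF assms] .
  then show ?thesis
    using stationary_dist_unique[OF assms] by blast
qed

lemma poisson_equation_stationary_mean:
  assumes K: "stochastic_kernel K" and irr: "irreducible_kernel K" and nu: "stationary_dist K nu"
  obtains h where "\<And>x. f x - (\<Sum>y\<in>UNIV. nu y * f y) = h x - (\<Sum>y\<in>UNIV. K x y * h y)"
proof -
  have "(\<Sum>x\<in>UNIV. nu x * (f x - (\<Sum>y\<in>UNIV. nu y * f y))) = 0"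
    using is_dist_sum[of nu] nu
    by (simp add: stationary_dist_def right_diff_distrib sum_subtractf flip: sum_distrib_right)
  then show ?thesis
    by (rule poisson_equation_solvable[OF assms]) (rule that)
qed

subsection \<open>Telescoping along a chain of distributions\<close>

lemma sum_chain_telescoping:
  fixes m :: "nat \<Rightarrow> 'b::finite \<Rightarrow> real"
  assumes step: "\<And>i y. m (Suc i) y = (\<Sum>x\<in>UNIV. m i x * K x y)"
    and mass: "\<And>i. sum (m i) UNIV = 1"
  shows "(\<Sum>i<n. \<Sum>x\<in>UNIV. m i x * f x)
    = real n * c + (\<Sum>x\<in>UNIV. m 0 x * V x) - (\<Sum>x\<in>UNIV. m n x * V x)
      + (\<Sum>i<n. \<Sum>x\<in>UNIV. m i x * (f x + (\<Sum>y\<in>UNIV. K x y * V y) - c - V x))"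
proof (induction n)
  case (Suc n)
  have "(\<Sum>x\<in>UNIV. m n x * (f x + (\<Sum>y\<in>UNIV. K x y * V y) - c - V x))
      = (\<Sum>x\<in>UNIV. m n x * f x) + (\<Sum>y\<in>UNIV. m (Suc n) y * V y) - c - (\<Sum>x\<in>UNIV. m n x * V x)"
    using mass[of n]
    by (simp add: algebra_simps sum.distrib sum_subtractf sum_kernel_swap step
        flip: sum_distrib_left)
  then show ?case
    using Suc by (simp add: algebra_simps)
qed simp

lemma tendsto_linear_plus_bounded_div:
  fixes B :: "nat \<Rightarrow> real"
  assumes "\<And>n. \<bar>B n\<bar> \<le> M"
  shows "(\<lambda>n. (real n * c + B n) / real n) \<longlonglongrightarrow> c"
proof -
  have "(\<lambda>n. B n / real n) \<longlonglongrightarrow> 0"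
    using assms
    by (intro Lim_null_comparison[OF _ lim_const_over_n[of M]] always_eventually allI)
       (simp add: divide_right_mono)
  then have "(\<lambda>n. c + B n / real n) \<longlonglongrightarrow> c"
    using tendsto_add[OF tendsto_const] by fastforce
  moreover have "\<forall>\<^sub>F n in sequentially. c + B n / real n = (real n * c + B n) / real n"
    using eventually_gt_at_top[of 0] by eventually_elim (simp add: field_simps)
  ultimately show ?thesis
    by (rule Lim_transform_eventually)
qed

lemma chain_average_tendsto:
  fixes m :: "nat \<Rightarrow> 'b::finite \<Rightarrow> real"
  assumes step: "\<And>i y. m (Suc i) y = (\<Sum>x\<in>UNIV. m i x * K x y)"
    and dist: "\<And>i. is_dist (m i)"
    and h: "\<And>x. f x - c = h x - (\<Sum>y\<in>UNIV. K x y * h y)"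
  shows "(\<lambda>n. (\<Sum>i<n. \<Sum>x\<in>UNIV. m i x * f x) / real n) \<longlonglongrightarrow> c"
proof -
  have mass: "\<And>i. sum (m i) UNIV = 1"
    using dist is_dist_sum by blast
  have defect: "f x + (\<Sum>y\<in>UNIV. K x y * h y) - c - h x = 0" for x
    using h[of x] by simp
  define B where "B n = (\<Sum>x\<in>UNIV. m 0 x * h x) - (\<Sum>x\<in>UNIV. m n x * h x)" for n
  have "(\<Sum>i<n. \<Sum>x\<in>UNIV. m i x * f x) = real n * c + B n" for n
    using sum_chain_telescoping[of m K f n c h, OF step mass] by (simp add: defect B_def)
  moreover have "\<bar>B n\<bar> \<le> 2 * (\<Sum>x\<in>UNIV. \<bar>h x\<bar>)" for n
    using abs_dist_sum_le[OF dist, of 0 h] abs_dist_sum_le[OF dist, of n h] unfolding B_def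
    by linarith
  then have "(\<lambda>n. (real n * c + B n) / real n) \<longlonglongrightarrow> c"
    by (rule tendsto_linear_plus_bounded_div)
  ultimately show ?thesis
    by simp
qed

lemma chain_sum_le_of_subsolution:
  fixes m :: "nat \<Rightarrow> 'b::finite \<Rightarrow> real"
  assumes step: "\<And>i y. m (Suc i) y = (\<Sum>x\<in>UNIV. m i x * K x y)"
    and dist: "\<And>i. is_dist (m i)"
    and V: "\<And>x. f x + (\<Sum>y\<in>UNIV. K x y * V y) \<le> c + V x"
  shows "(\<Sum>i<n. \<Sum>x\<in>UNIV. m i x * f x) \<le> real n * c + 2 * (\<Sum>x\<in>UNIV. \<bar>V x\<bar>)"
proof -
  have mass: "\<And>i. sum (m i) UNIV = 1"
    using dist is_dist_sum by blast
  have "(\<Sum>i<n. \<Sum>x\<in>UNIV. m i x * (f x + (\<Sum>y\<in>UNIV. K x y * V y) - c - V x)) \<le> 0"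
  proof (intro sum_nonpos mult_nonneg_nonpos)
    show "0 \<le> m i x" for i x
      by (rule is_dist_nonneg[OF dist])
    show "f x + (\<Sum>y\<in>UNIV. K x y * V y) - c - V x \<le> 0" for x
      using V[of x] by linarith
  qed
  then show ?thesis
    using sum_chain_telescoping[of m K f n c V, OF step mass]
      abs_dist_sum_le[OF dist, of 0 V] abs_dist_sum_le[OF dist, of n V] by linarith
qed

subsection \<open>Average reward of a time-invariant policy\<close>

lemma stochastic_kernel_outK:
  assumes "umco_channel P" and "ti_policy p"
  shows "stochastic_kernel (outK P p)"
proof -
  have "sum (outK P p x) UNIV = (\<Sum>a\<in>UNIV. sum (P x a) UNIV * p x a)" for x
    unfolding outK_def by (simp add: sum_distrib_right) (rule sum.swap)
  then show ?thesis
    using assms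
    by (auto simp: stochastic_kernel_def is_dist_def umco_channel_def ti_policy_def outK_def
        intro!: sum_nonneg)
qed

lemma invariant_dist_iff_stationary_dist:
  "invariant_dist P p nu \<longleftrightarrow> stationary_dist (outK P p) nu"
  by (simp add: invariant_dist_def stationary_dist_def mult.commute)

lemma marg_Suc_outK:
  "marg P p mu (Suc i) y = (\<Sum>x\<in>UNIV. marg P p mu i x * outK P p x y)"
  by (simp add: outK_def sum_distrib_left ac_simps)

lemma is_dist_marg:
  assumes "umco_channel P" and "ti_policy p" and "is_dist mu"
  shows "is_dist (marg P p mu i)"
proof (induction i)
  case (Suc i)
  then show ?case
    unfolding marg_Suc_outK[abs_def] by (intro is_dist_kernel_step stochastic_kernel_outK assms(1,2))
qed (simp add: assms(3))

lemma expsum_eq_sum_marg_ell: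
  "expsum P p mu n = (\<Sum>i<n. \<Sum>b\<in>UNIV. marg P p mu i b * ell P p b)"
  by (simp add: expsum_def ell_def ell1_def outK_def sum_distrib_left ac_simps)

context
  fixes P :: "'b::finite \<Rightarrow> 'a::finite \<Rightarrow> 'b \<Rightarrow> real" and p :: "'b \<Rightarrow> 'a \<Rightarrow> real"
  assumes P: "umco_channel P" and p: "ti_policy p" and irr: "irreducible_kernel (outK P p)"
begin

lemma invariant_dist_ex1: "\<exists>!nu. invariant_dist P p nu"
  using stationary_dist_ex1[OF stochastic_kernel_outK[OF P p] irr]
  by (simp add: invariant_dist_iff_stationary_dist)

lemma Jinf_eq:
  assumes "invariant_dist P p nu"
  shows "Jinf P p = (\<Sum>b\<in>UNIV. nu b * ell P p b)"
  using the1_equality[of "invariant_dist P p", OF invariant_dist_ex1 assms] by (simp add: Jinf_def)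

lemma expsum_average_tendsto:
  assumes mu: "is_dist mu" and nu: "invariant_dist P p nu"
  shows "(\<lambda>n. expsum P p mu n / real n) \<longlonglongrightarrow> (\<Sum>b\<in>UNIV. nu b * ell P p b)"
proof -
  obtain h where "\<And>x. ell P p x - (\<Sum>y\<in>UNIV. nu y * ell P p y) = h x - (\<Sum>y\<in>UNIV. outK P p x y * h y)"
    using poisson_equation_stationary_mean stochastic_kernel_outK[OF P p] irr nu
    unfolding invariant_dist_iff_stationary_dist by blast
  then show ?thesis
    unfolding expsum_eq_sum_marg_ell
    by (intro chain_average_tendsto[where K = "outK P p" and h = h] marg_Suc_outK
        is_dist_marg P p mu)
qed

lemma Jmu_eq:
  assumes "is_dist mu" and "invariant_dist P p nu"
  shows "Jmu P p mu = ereal (\<Sum>b\<in>UNIV. nu b * ell P p b)"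
  unfolding Jmu_def
  by (intro lim_imp_Liminf) (auto intro: expsum_average_tendsto[OF assms])

end

subsection \<open>Optimal policies\<close>

lemma sum_stationary_bellman_defect:
  assumes "stationary_dist K nu"
  shows "(\<Sum>x\<in>UNIV. nu x * (f x + (\<Sum>y\<in>UNIV. K x y * V y) - c - V x))
    = (\<Sum>x\<in>UNIV. nu x * f x) - c"
  using assms is_dist_sum[of nu] stationary_dist_sum_kernel[OF assms, of V]
  by (simp add: algebra_simps sum.distrib sum_subtractf stationary_dist_def
      flip: sum_distrib_left)

text \<open>Policy improvement: the policy that uses q at b0 and ps elsewhere has Bellman defect only at
  b0, so its average reward exceeds the optimum by its (positive) stationary mass at b0 times that
  defect.\<close>

lemma bellman_inequality:
  assumes P: "umco_channel P"
    and irr: "\<forall>p. ti_policy p \<longrightarrow> irreducible_kernel (outK P p)"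
    and ps: "ti_policy ps" and opt: "\<forall>p. ti_policy p \<longrightarrow> Jinf P p \<le> Jinf P ps"
    and V: "\<And>b. ell P ps b + (\<Sum>y\<in>UNIV. outK P ps b y * V y) = Jinf P ps + V b"
    and q: "is_dist q"
  shows "ell1 P b0 q + (\<Sum>z\<in>UNIV. V z * (\<Sum>a\<in>UNIV. P b0 a z * q a)) \<le> Jinf P ps + V b0"
proof (rule ccontr)
  assume gt: "\<not> ?thesis"
  define p' where "p' = ps(b0 := q)"
  define D where "D b = ell P p' b + (\<Sum>y\<in>UNIV. outK P p' b y * V y) - Jinf P ps - V b" for b
  have p': "ti_policy p'"
    using ps q by (simp add: p'_def ti_policy_def)
  have K': "stochastic_kernel (outK P p')" and irr': "irreducible_kernel (outK P p')"
    using stochastic_kernel_outK[OF P p'] irr p' by auto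
  obtain nu' where nu': "invariant_dist P p' nu'"
    using invariant_dist_ex1[OF P p' irr'] by blast
  then have nu'_stat: "stationary_dist (outK P p') nu'"
    by (simp add: invariant_dist_iff_stationary_dist)
  have D_b0: "0 < D b0"
    using gt by (simp add: D_def p'_def ell_def outK_def mult.commute)
  have "D b = 0" if "b \<noteq> b0" for b
    using V[of b] that by (simp add: D_def p'_def ell_def outK_def)
  then have "(\<Sum>b\<in>UNIV. nu' b * D b) = nu' b0 * D b0"
    by (subst sum.remove[of _ b0]) auto
  moreover have "(\<Sum>b\<in>UNIV. nu' b * D b) = Jinf P p' - Jinf P ps"
    using sum_stationary_bellman_defect[OF nu'_stat, of "ell P p'" V "Jinf P ps"]
    by (simp add: D_def Jinf_eq[OF P p' irr' nu'])
  moreover have "0 < nu' b0"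
    by (rule stationary_dist_pos[OF K' irr' nu'_stat])
  ultimately have "Jinf P ps < Jinf P p'"
    using D_b0 by (smt (verit) mult_pos_pos)
  with opt p' show False
    by force
qed

lemma optimal_policy_relative_value:
  assumes P: "umco_channel P"
    and irr: "\<forall>p. ti_policy p \<longrightarrow> irreducible_kernel (outK P p)"
    and ps: "ti_policy ps" and opt: "\<forall>p. ti_policy p \<longrightarrow> Jinf P p \<le> Jinf P ps"
  obtains V where
    "\<And>b q. is_dist q \<Longrightarrow>
       ell1 P b q + (\<Sum>z\<in>UNIV. V z * (\<Sum>a\<in>UNIV. P b a z * q a)) \<le> Jinf P ps + V b"
    "\<And>b. ell1 P b (ps b) + (\<Sum>z\<in>UNIV. V z * (\<Sum>a\<in>UNIV. P b a z * ps b a)) = Jinf P ps + V b"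
proof -
  have irr_ps: "irreducible_kernel (outK P ps)"
    using irr ps by blast
  obtain nu where nu: "invariant_dist P ps nu"
    using invariant_dist_ex1[OF P ps irr_ps] by blast
  then have "stationary_dist (outK P ps) nu"
    by (simp add: invariant_dist_iff_stationary_dist)
  then obtain V where
    "\<And>x. ell P ps x - (\<Sum>y\<in>UNIV. nu y * ell P ps y) = V x - (\<Sum>y\<in>UNIV. outK P ps x y * V y)"
    by (rule poisson_equation_stationary_mean[OF stochastic_kernel_outK[OF P ps] irr_ps, where f = "ell P ps"]) blast
  then have V: "\<And>b. ell P ps b + (\<Sum>y\<in>UNIV. outK P ps b y * V y) = Jinf P ps + V b"
    by (simp add: Jinf_eq[OF P ps irr_ps nu] algebra_simps)
  show ?thesis
  proof (rule that[of V])
    show "ell1 P b q + (\<Sum>z\<in>UNIV. V z * (\<Sum>a\<in>UNIV. P b a z * q a)) \<le> Jinf P ps + V b"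
      if "is_dist q" for b q
      by (rule bellman_inequality[OF P irr ps opt V that])
    show "ell1 P b (ps b) + (\<Sum>z\<in>UNIV. V z * (\<Sum>a\<in>UNIV. P b a z * ps b a)) = Jinf P ps + V b" for b
      using V[of b] by (simp add: ell_def outK_def mult.commute)
  qed
qed

lemma capacity_FB_eq_Jinf:
  assumes P: "umco_channel P" and ps: "ti_policy ps" and irr: "irreducible_kernel (outK P ps)"
    and V: "\<And>b q. is_dist q \<Longrightarrow>
       ell1 P b q + (\<Sum>z\<in>UNIV. V z * (\<Sum>a\<in>UNIV. P b a z * q a)) \<le> Jinf P ps + V b"
    and mu: "is_dist mu"
  shows "capacity_FB P mu = ereal (Jinf P ps)"
proof -
  define S where "S n = (SUP p\<in>{p. ti_policy p}. ereal (expsum P p mu n))" for n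
  define U where "U n = real n * Jinf P ps + 2 * (\<Sum>b\<in>UNIV. \<bar>V b\<bar>)" for n
  have "expsum P p mu n \<le> U n" if p: "ti_policy p" for p n
    unfolding expsum_eq_sum_marg_ell U_def
  proof (rule chain_sum_le_of_subsolution[of "marg P p mu" "outK P p", OF marg_Suc_outK is_dist_marg[OF P p mu]])
    show "ell P p b + (\<Sum>z\<in>UNIV. outK P p b z * V z) \<le> Jinf P ps + V b" for b
      using V[of "p b" b] p by (simp add: ti_policy_def ell_def outK_def mult.commute)
  qed
  then have "S n \<le> ereal (U n)" for n
    unfolding S_def by (intro SUP_least) auto
  then have upper: "ereal (1 / real n) * S n \<le> ereal (U n / real n)" for n
    using ereal_mult_left_mono[of "S n" "ereal (U n)" "ereal (1 / real n)"] by simp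
  have "ereal (expsum P ps mu n) \<le> S n" for n
    unfolding S_def using ps by (intro SUP_upper) auto
  then have lower: "ereal (expsum P ps mu n / real n) \<le> ereal (1 / real n) * S n" for n
    using ereal_mult_left_mono[of "ereal (expsum P ps mu n)" "S n" "ereal (1 / real n)"] by simp
  have "liminf (\<lambda>n. ereal (U n / real n)) = ereal (Jinf P ps)"
    unfolding U_def
    by (intro lim_imp_Liminf tendsto_ereal tendsto_linear_plus_bounded_div[of _ "2 * (\<Sum>b\<in>UNIV. \<bar>V b\<bar>)"])
       (auto intro: sum_nonneg)
  moreover obtain nu where nu: "invariant_dist P ps nu"
    using invariant_dist_ex1[OF P ps irr] by blast
  have "liminf (\<lambda>n. ereal (expsum P ps mu n / real n)) = ereal (Jinf P ps)"
    using Jmu_eq[OF P ps irr mu nu] unfolding Jmu_def Jinf_eq[OF P ps irr nu] .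
  moreover have "liminf (\<lambda>n. ereal (1 / real n) * S n) \<le> liminf (\<lambda>n. ereal (U n / real n))"
    by (intro Liminf_mono always_eventually allI upper)
  moreover have "liminf (\<lambda>n. ereal (expsum P ps mu n / real n)) \<le> liminf (\<lambda>n. ereal (1 / real n) * S n)"
    by (intro Liminf_mono always_eventually allI lower)
  ultimately show ?thesis
    unfolding capacity_FB_def S_def[symmetric] by (simp add: antisym)
qed

theorem mainTheorem8:
  fixes P :: "'b::finite \<Rightarrow> 'a::finite \<Rightarrow> 'b \<Rightarrow> real"
  assumes "umco_channel P"
    and "\<forall>p. ti_policy p \<longrightarrow> irreducible_kernel (outK P p)"
  shows "(\<forall>p. ti_policy p \<longrightarrow>
            (\<exists>!nu. invariant_dist P p nu) \<and>
            (\<forall>nu. invariant_dist P p nu \<longrightarrow>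
               (\<forall>mu. is_dist mu \<longrightarrow> Jmu P p mu = ereal (\<Sum>b\<in>UNIV. nu b * ell P p b))))
       \<and> (\<forall>ps. ti_policy ps \<and> (\<forall>p. ti_policy p \<longrightarrow> Jinf P p \<le> Jinf P ps) \<longrightarrow>
            (\<exists>V :: 'b \<Rightarrow> real. \<forall>b. Jinf P ps + V b =
               (SUP q\<in>{q. is_dist q}. ell1 P b q + (\<Sum>z\<in>UNIV. V z * (\<Sum>a\<in>UNIV. P b a z * q a)))) \<and>
            (\<forall>mu. is_dist mu \<longrightarrow> ereal (Jinf P ps) = capacity_FB P mu))"
proof (intro conjI allI impI)
  fix p :: "'b \<Rightarrow> 'a \<Rightarrow> real"
  assume p: "ti_policy p"
  then have "irreducible_kernel (outK P p)"
    using assms(2) by blast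
  then show "\<exists>!nu. invariant_dist P p nu"
    and "\<And>nu mu. invariant_dist P p nu \<Longrightarrow> is_dist mu \<Longrightarrow> Jmu P p mu = ereal (\<Sum>b\<in>UNIV. nu b * ell P p b)"
    using invariant_dist_ex1 Jmu_eq assms(1) p by blast+
next
  fix ps :: "'b \<Rightarrow> 'a \<Rightarrow> real"
  assume "ti_policy ps \<and> (\<forall>p. ti_policy p \<longrightarrow> Jinf P p \<le> Jinf P ps)"
  then have ps: "ti_policy ps" and opt: "\<forall>p. ti_policy p \<longrightarrow> Jinf P p \<le> Jinf P ps"
    by auto
  obtain V where V_le: "\<And>b q. is_dist q \<Longrightarrow>
       ell1 P b q + (\<Sum>z\<in>UNIV. V z * (\<Sum>a\<in>UNIV. P b a z * q a)) \<le> Jinf P ps + V b"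
    and V_eq: "\<And>b. ell1 P b (ps b) + (\<Sum>z\<in>UNIV. V z * (\<Sum>a\<in>UNIV. P b a z * ps b a)) = Jinf P ps + V b"
    using optimal_policy_relative_value[OF assms ps opt] by blast
  have "is_dist (ps b)" for b
    using ps by (simp add: ti_policy_def)
  then have "Jinf P ps + V b =
      (SUP q\<in>{q. is_dist q}. ell1 P b q + (\<Sum>z\<in>UNIV. V z * (\<Sum>a\<in>UNIV. P b a z * q a)))" for b
    by (intro cSup_eq_maximum[symmetric] rev_image_eqI[of "ps b"]) (auto intro: V_le simp: V_eq)
  then show "\<exists>V :: 'b \<Rightarrow> real. \<forall>b. Jinf P ps + V b =
      (SUP q\<in>{q. is_dist q}. ell1 P b q + (\<Sum>z\<in>UNIV. V z * (\<Sum>a\<in>UNIV. P b a z * q a)))"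
    by blast
  show "ereal (Jinf P ps) = capacity_FB P mu" if "is_dist mu" for mu
    using capacity_FB_eq_Jinf[OF assms(1) ps _ V_le that] assms(2) ps by simp
qed

end
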